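(* Let $G$ be the cube graph $Q_3$. Then $B_3(G)=5$.
   Context: Fix a set $\Sigma$ of symbols (bond-edge types) and a disjoint copy $\hat\Sigma=\{\hat a:a\in\Sigma\}$ with $\hat{\hat a}=a$; elements of $\Sigma\cup\hat\Sigma$ are cohesive-end types. A tile is a finite multiset of cohesive-end types. A pot is a finite set $P$ of tiles such that whenever $x$ occurs in a tile of $P$, $\hat x$ occurs in some tile of $P$; $\Sigma(P)$ is the set of $a\in\Sigma$ such that $a$ or $\hat a$ occurs in a tile of $P$. Graphs are finite, loops and multiple edges allowed. An assembly design of a graph $H$ labels the half-edges of $H$ by cohesive-end types so that the two half-edges of each edge receive complementary labels $x,\hat x$; $t_v$ is the multiset of labels at $v$, $P_\lambda(H)=\{t_v\}$, and $P$ realizes $H$ ($H\in\mathcal{O}(P)$) if some assembly design $\lambda$ has $P_\lambda(H)\subseteq P$. $P$ realizes $G$ according to Scenario 3 if $G\in\mathcal{O}(P)$, every $H\in\mathcal{O}(P)$ has $\#V(H)\ge\#V(G)$, and every $H\in\mathcal{O}(P)$ with $\#V(H)=\#V(G)$ is isomorphic to $G$. $B_3(G)=\min\{\#\Sigma(P): P \text{ realizes } G \text{ according to Scenario 3}\}$. *)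

theory Defs
  imports Main "HOL-Library.Multiset"
begin

(* Cohesive-end types over the symbol set Sigma = nat: Unh a = a, Hat a = \<hat>a *)
datatype cet = Unh nat | Hat nat

fun hatc :: "cet \<Rightarrow> cet" where
  "hatc (Unh a) = Hat a"
| "hatc (Hat a) = Unh a"

type_synonym tile = "cet multiset"

definition is_pot :: "tile set \<Rightarrow> bool" where
  "is_pot P \<longleftrightarrow> finite P \<and> (\<forall>t\<in>P. \<forall>x. x \<in># t \<longrightarrow> (\<exists>t'\<in>P. hatc x \<in># t'))"

definition sigma_of :: "tile set \<Rightarrow> nat set" where
  "sigma_of P = {a. \<exists>t\<in>P. Unh a \<in># t \<or> Hat a \<in># t}"

(* Finite multigraphs (loops and multiple edges allowed): each edge e has two
   half-edges (e,True), (e,False) with endpoints endp e True, endp e False. *)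
record graph =
  verts :: "nat set"
  edges :: "nat set"
  endp  :: "nat \<Rightarrow> bool \<Rightarrow> nat"

definition wf_graph :: "graph \<Rightarrow> bool" where
  "wf_graph H \<longleftrightarrow> finite (verts H) \<and> finite (edges H) \<and> verts H \<noteq> {} \<and>
     (\<forall>e\<in>edges H. \<forall>b. endp H e b \<in> verts H)"

definition assembly_design :: "graph \<Rightarrow> (nat \<Rightarrow> bool \<Rightarrow> cet) \<Rightarrow> bool" where
  "assembly_design H lam \<longleftrightarrow> (\<forall>e\<in>edges H. lam e False = hatc (lam e True))"

definition tile_at :: "graph \<Rightarrow> (nat \<Rightarrow> bool \<Rightarrow> cet) \<Rightarrow> nat \<Rightarrow> tile" where
  "tile_at H lam v = (\<Sum>e\<in>edges H.
      (if endp H e True = v then {#lam e True#} else {#}) +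
      (if endp H e False = v then {#lam e False#} else {#}))"

definition pot_of_design :: "graph \<Rightarrow> (nat \<Rightarrow> bool \<Rightarrow> cet) \<Rightarrow> tile set" where
  "pot_of_design H lam = tile_at H lam ` verts H"

definition realizes :: "tile set \<Rightarrow> graph \<Rightarrow> bool" where
  "realizes P H \<longleftrightarrow> (\<exists>lam. assembly_design H lam \<and> pot_of_design H lam \<subseteq> P)"

definition graph_iso :: "graph \<Rightarrow> graph \<Rightarrow> bool" where
  "graph_iso G H \<longleftrightarrow> (\<exists>f g. bij_betw f (verts G) (verts H) \<and> bij_betw g (edges G) (edges H) \<and>
     (\<forall>e\<in>edges G. {endp H (g e) True, endp H (g e) False} =
                   f ` {endp G e True, endp G e False}))"

definition realizes_scen3 :: "tile set \<Rightarrow> graph \<Rightarrow> bool" where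
  "realizes_scen3 P G \<longleftrightarrow> is_pot P \<and> realizes P G \<and>
     (\<forall>H. wf_graph H \<and> realizes P H \<longrightarrow> card (verts H) \<ge> card (verts G)) \<and>
     (\<forall>H. wf_graph H \<and> realizes P H \<and> card (verts H) = card (verts G) \<longrightarrow> graph_iso H G)"

(* The cube graph Q_3: vertices 0..7, edges join numbers differing in one bit *)
definition q3_edge_list :: "(nat \<times> nat) list" where
  "q3_edge_list = [(0,1),(2,3),(4,5),(6,7),(0,2),(1,3),(4,6),(5,7),(0,4),(1,5),(2,6),(3,7)]"

definition Q3 :: graph where
  "Q3 = \<lparr> verts = {0..<8}, edges = {0..<12},
          endp = (\<lambda>e b. if e < 12 then (if b then fst (q3_edge_list ! e) else snd (q3_edge_list ! e)) else 0) \<rparr>"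

end

(*
  If two half-edges carry the same label, exchanging their endpoints changes no
  tile, so in Scenario 3 the new graph is again a cube, in particular simple and bipartite.
  Every edge of the cube lies on two faces sharing no other edge, so a 2-colouring that is proper
  on all but two edges is proper everywhere; hence equal labels can only sit at the same vertex,
  on edges whose other ends coincide, or on antipodal edges matched crosswise. With at most four
  symbols this forces the edges into four single-symbol stars centred on one side of the
  bipartition, and the tiles at three centres and their common neighbour assemble K_{3,3},
  which has only six vertices.

  The pot {a^3, b d e, c^3, ^a ^b ^c, ^c ^e ^e, ^a ^d ^d} (writing ^x for the
  complement of x) realizes the cube. Balancing each symbol shows that every assembly has 8k
  vertices, and for k = 1 the bonds allowed by the pot leave only the cube.
*)

theory Submission
  imports Defs "HOL-Combinatorics.Transposition"
begin

section \<open>Tiles of an assembly design\<close>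

lemma hatc_hatc [simp]: "hatc (hatc x) = x"
  by (cases x) auto

lemma assembly_design_hatc:
  "assembly_design H lam \<Longrightarrow> e \<in> edges H \<Longrightarrow> lam e (\<not> b) = hatc (lam e b)"
  unfolding assembly_design_def by (cases b) auto

lemma assembly_design_unhatted_end:
  assumes "assembly_design H lam" "e \<in> edges H"
  obtains b a where "lam e b = Unh a" "lam e (\<not> b) = Hat a"
proof (cases "lam e True")
  case (Unh a)
  then show ?thesis
    using assms that[of True a] by (simp add: assembly_design_def)
next
  case (Hat a)
  then show ?thesis
    using assms that[of False a] by (simp add: assembly_design_def)
qed

definition half_edges_at :: "graph \<Rightarrow> nat \<Rightarrow> (nat \<times> bool) set" where
  "half_edges_at H v = {(e, b). e \<in> edges H \<and> endp H e b = v}"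

lemma finite_half_edges_at: "finite (edges H) \<Longrightarrow> finite (half_edges_at H v)"
  unfolding half_edges_at_def by (rule finite_subset[of _ "edges H \<times> UNIV"]) auto

lemma tile_at_eq_image_mset:
  assumes "finite (edges H)"
  shows "tile_at H lam v = image_mset (case_prod lam) (mset_set (half_edges_at H v))"
proof -
  have "tile_at H lam v = (\<Sum>(e, b)\<in>edges H \<times> UNIV. if endp H e b = v then {#lam e b#} else {#})"
    unfolding tile_at_def sum.cartesian_product[symmetric] UNIV_bool by (simp add: add.commute)
  also have "\<dots> = (\<Sum>h\<in>half_edges_at H v. {#case_prod lam h#})"
  proof -
    have "half_edges_at H v = {h \<in> edges H \<times> UNIV. case_prod (endp H) h = v}"
      unfolding half_edges_at_def by auto
    then show ?thesis
      using assms by (simp add: sum.inter_filter case_prod_unfold)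
  qed
  also have "\<dots> = image_mset (case_prod lam) (mset_set (half_edges_at H v))"
    by (simp add: sum_unfold_sum_mset)
  finally show ?thesis .
qed

lemma label_in_tile_at:
  assumes "finite (edges H)" "e \<in> edges H"
  shows "lam e b \<in># tile_at H lam (endp H e b)"
  using assms finite_half_edges_at[OF assms(1)]
  by (force simp: tile_at_eq_image_mset half_edges_at_def)

lemma in_tile_atE:
  assumes "finite (edges H)" "x \<in># tile_at H lam v"
  obtains e b where "e \<in> edges H" "endp H e b = v" "lam e b = x"
  using assms finite_half_edges_at[OF assms(1)]
  by (auto simp: tile_at_eq_image_mset half_edges_at_def)

lemma two_labels_subseteq_tile_at:
  assumes "finite (edges H)" "e \<in> edges H" "e' \<in> edges H" "(e, b) \<noteq> (e', b')"
    and "endp H e b = v" "endp H e' b' = v"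
  shows "{#lam e b, lam e' b'#} \<subseteq># tile_at H lam v"
proof -
  have "{(e, b), (e', b')} \<subseteq> half_edges_at H v"
    using assms unfolding half_edges_at_def by auto
  then have "image_mset (case_prod lam) (mset_set {(e, b), (e', b')})
      \<subseteq># image_mset (case_prod lam) (mset_set (half_edges_at H v))"
    by (intro image_mset_subseteq_mono subset_imp_msubset_mset_set finite_half_edges_at assms(1))
  then show ?thesis
    using assms(4) by (simp add: tile_at_eq_image_mset[OF assms(1)])
qed

lemma half_edges_eq_if_count_le_1:
  assumes "finite (edges H)" "count (tile_at H lam v) x \<le> 1"
    and "e \<in> edges H" "endp H e b = v" "lam e b = x"
    and "e' \<in> edges H" "endp H e' b' = v" "lam e' b' = x"
  shows "(e, b) = (e', b')"
proof (rule ccontr)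
  assume "(e, b) \<noteq> (e', b')"
  then have "{#x, x#} \<subseteq># tile_at H lam v"
    using two_labels_subseteq_tile_at[OF assms(1,3,6)] assms(4,5,7,8) by metis
  then show False
    using assms(2) mset_subset_eq_count[of "{#x, x#}" _ x] by fastforce
qed

lemma sum_tile_at:
  assumes "wf_graph H"
  shows "(\<Sum>v\<in>verts H. tile_at H lam v) = (\<Sum>e\<in>edges H. {#lam e True, lam e False#})"
proof -
  have "(\<Sum>v\<in>verts H. tile_at H lam v) = (\<Sum>e\<in>edges H. \<Sum>v\<in>verts H.
      (if endp H e True = v then {#lam e True#} else {#}) +
      (if endp H e False = v then {#lam e False#} else {#}))"
    unfolding tile_at_def by (rule sum.swap)
  also have "\<dots> = (\<Sum>e\<in>edges H. {#lam e True, lam e False#})"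
    using assms unfolding wf_graph_def by (intro sum.cong) (simp_all add: sum.distrib)
  finally show ?thesis .
qed

text \<open>Every edge contributes one \<open>a\<close> and one \<open>\<hat>a\<close>.\<close>

lemma count_unhatted_eq_count_hatted:
  assumes "wf_graph H" "assembly_design H lam"
  shows "(\<Sum>v\<in>verts H. count (tile_at H lam v) (Unh a)) =
    (\<Sum>v\<in>verts H. count (tile_at H lam v) (Hat a))"
proof -
  have pair: "count {#y, hatc y#} (Unh a) = count {#y, hatc y#} (Hat a)" for y
    by (cases y) auto
  have "(\<Sum>v\<in>verts H. count (tile_at H lam v) x) =
      (\<Sum>e\<in>edges H. count {#lam e True, hatc (lam e True)#} x)" for x
    using assms(2) unfolding count_sum[symmetric] sum_tile_at[OF assms(1)] assembly_design_def
    by (auto simp: count_sum intro: sum.cong)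
  then show ?thesis
    using pair by simp
qed

lemma sum_size_tile_at:
  assumes "wf_graph H"
  shows "(\<Sum>v\<in>verts H. size (tile_at H lam v)) = 2 * card (edges H)"
  using arg_cong[OF sum_tile_at[OF assms], of size] by simp

fun symbol :: "cet \<Rightarrow> nat" where
  "symbol (Unh a) = a"
| "symbol (Hat a) = a"

lemma symbol_hatc [simp]: "symbol (hatc x) = symbol x"
  by (cases x) auto

lemma symbol_eq_iff: "symbol x = symbol y \<longleftrightarrow> x = y \<or> x = hatc y"
  by (cases x; cases y) auto

lemma symbol_in_sigma_of: "t \<in> P \<Longrightarrow> x \<in># t \<Longrightarrow> symbol x \<in> sigma_of P"
  by (cases x) (auto simp: sigma_of_def)

lemma finite_sigma_of: "finite P \<Longrightarrow> finite (sigma_of P)"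
proof (rule finite_subset)
  show "sigma_of P \<subseteq> (\<Union>t\<in>P. symbol ` set_mset t)"
    unfolding sigma_of_def by (force intro: rev_image_eqI[of "Unh _"] rev_image_eqI[of "Hat _"])
qed auto

section \<open>Exchanging two half-edges\<close>

definition swap_halfedges :: "graph \<Rightarrow> nat \<times> bool \<Rightarrow> nat \<times> bool \<Rightarrow> graph" where
  "swap_halfedges H h h' = H\<lparr>endp := \<lambda>e b. case_prod (endp H) (transpose h h' (e, b))\<rparr>"

lemma endp_swap_halfedges:
  "endp (swap_halfedges H h h') e b = case_prod (endp H) (transpose h h' (e, b))"
  by (simp add: swap_halfedges_def)

lemma fst_transpose_in_edges:
  assumes "fst h \<in> edges H" "fst h' \<in> edges H"
  shows "fst (transpose h h' x) \<in> edges H \<longleftrightarrow> fst x \<in> edges H"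
  using assms by (auto simp: transpose_def)

lemma half_edges_at_swap_halfedges:
  assumes "fst h \<in> edges H" "fst h' \<in> edges H"
  shows "half_edges_at (swap_halfedges H h h') v = transpose h h' ` half_edges_at H v"
proof (rule set_eqI)
  fix x :: "nat \<times> bool"
  have "x \<in> half_edges_at (swap_halfedges H h h') v \<longleftrightarrow>
      fst x \<in> edges H \<and> case_prod (endp H) (transpose h h' x) = v"
    by (auto simp: half_edges_at_def endp_swap_halfedges swap_halfedges_def)
  also have "\<dots> \<longleftrightarrow> transpose h h' x \<in> half_edges_at H v"
    using fst_transpose_in_edges[OF assms, of x]
    by (auto simp: half_edges_at_def split: prod.splits)
  finally show "x \<in> half_edges_at (swap_halfedges H h h') v \<longleftrightarrow>
      x \<in> transpose h h' ` half_edges_at H v"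
    by (simp add: in_transpose_image_iff)
qed

lemma tile_at_swap_halfedges:
  assumes "finite (edges H)" "fst h \<in> edges H" "fst h' \<in> edges H"
    and "case_prod lam h = case_prod lam h'"
  shows "tile_at (swap_halfedges H h h') lam v = tile_at H lam v"
proof -
  have fin: "finite (edges (swap_halfedges H h h'))"
    using assms(1) by (simp add: swap_halfedges_def)
  have lab: "case_prod lam \<circ> transpose h h' = case_prod lam"
  proof
    fix x
    show "(case_prod lam \<circ> transpose h h') x = case_prod lam x"
      using assms(4) by (cases "x = h \<or> x = h'") auto
  qed
  have "tile_at (swap_halfedges H h h') lam v
      = image_mset (case_prod lam) (mset_set (transpose h h' ` half_edges_at H v))"
    by (simp add: tile_at_eq_image_mset[OF fin] half_edges_at_swap_halfedges[OF assms(2,3)])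
  also have "\<dots> = image_mset (case_prod lam \<circ> transpose h h') (mset_set (half_edges_at H v))"
    by (simp only: image_mset_mset_set[OF inj_on_transpose, symmetric] image_mset.compositionality)
  also have "\<dots> = tile_at H lam v"
    by (simp only: lab tile_at_eq_image_mset[OF assms(1)])
  finally show ?thesis .
qed

lemma realizes_scen3_swap_halfedges:
  assumes "realizes_scen3 P G" "wf_graph G" "assembly_design G lam" "pot_of_design G lam \<subseteq> P"
    and "fst h \<in> edges G" "fst h' \<in> edges G" "case_prod lam h = case_prod lam h'"
  shows "graph_iso (swap_halfedges G h h') G"
proof -
  let ?H = "swap_halfedges G h h'"
  have "endp ?H e b \<in> verts G" if "e \<in> edges G" for e b
    using that assms(2) fst_transpose_in_edges[OF assms(5,6), of "(e, b)"]
    by (auto simp: wf_graph_def endp_swap_halfedges split: prod.splits)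
  then have "wf_graph ?H"
    using assms(2) by (simp add: wf_graph_def swap_halfedges_def)
  moreover have "realizes P ?H"
    unfolding realizes_def
  proof (intro exI conjI)
    show "assembly_design ?H lam"
      using assms(3) by (simp add: assembly_design_def swap_halfedges_def)
    have "tile_at ?H lam v = tile_at G lam v" for v
      using assms(2,5-7) by (simp add: tile_at_swap_halfedges wf_graph_def)
    then show "pot_of_design ?H lam \<subseteq> P"
      using assms(4) by (simp add: pot_of_design_def swap_halfedges_def)
  qed
  ultimately show ?thesis
    using assms(1) unfolding realizes_scen3_def by (simp add: swap_halfedges_def)
qed

section \<open>Simple bipartite graphs\<close>

definition ends :: "graph \<Rightarrow> nat \<Rightarrow> nat set" where
  "ends H e = {endp H e True, endp H e False}"

lemma ends_eq: "ends H e = {endp H e b, endp H e (\<not> b)}"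
  by (cases b) (auto simp: ends_def)

lemma ends_swap_halfedges:
  assumes "e \<noteq> e'"
  shows "ends (swap_halfedges H (e, b) (e', b')) e = {endp H e' b', endp H e (\<not> b)}"
    and "ends (swap_halfedges H (e, b) (e', b')) e' = {endp H e b, endp H e' (\<not> b')}"
    and "k \<noteq> e \<Longrightarrow> k \<noteq> e' \<Longrightarrow> ends (swap_halfedges H (e, b) (e', b')) k = ends H k"
  using assms
  by (cases b; cases b'; simp add: ends_def endp_swap_halfedges transpose_def insert_commute)+

lemma graph_iso_ends:
  "graph_iso H G \<longleftrightarrow> (\<exists>f g. bij_betw f (verts H) (verts G) \<and> bij_betw g (edges H) (edges G) \<and>
     (\<forall>e\<in>edges H. ends G (g e) = f ` ends H e))"
  unfolding graph_iso_def ends_def ..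

text \<open>Loops are excluded by the colouring.\<close>

definition simple_bipartite :: "graph \<Rightarrow> bool" where
  "simple_bipartite H \<longleftrightarrow> inj_on (ends H) (edges H) \<and>
     (\<exists>c :: nat \<Rightarrow> bool. \<forall>e\<in>edges H. c (endp H e True) \<noteq> c (endp H e False))"

lemma doubleton_eq_proper:
  fixes c :: "'a \<Rightarrow> bool"
  assumes "{a, b} = {a', b'}" "c a \<noteq> c b"
  shows "c a' \<noteq> c b'"
  using assms by (auto simp: doubleton_eq_iff)

lemma simple_bipartite_graph_iso:
  assumes "graph_iso H G" "simple_bipartite G"
  shows "simple_bipartite H"
proof -
  obtain f g where g: "bij_betw g (edges H) (edges G)"
    and fg: "\<And>e. e \<in> edges H \<Longrightarrow> ends G (g e) = f ` ends H e"
    using assms(1) unfolding graph_iso_ends by blast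
  obtain c :: "nat \<Rightarrow> bool"
    where c: "\<And>e. e \<in> edges G \<Longrightarrow> c (endp G e True) \<noteq> c (endp G e False)"
    and inj: "inj_on (ends G) (edges G)"
    using assms(2) unfolding simple_bipartite_def by blast
  have "inj_on (ends H) (edges H)"
  proof (rule inj_onI)
    fix e e' assume "e \<in> edges H" "e' \<in> edges H" "ends H e = ends H e'"
    then have "ends G (g e) = ends G (g e')"
      using fg by simp
    moreover have "g e \<in> edges G" "g e' \<in> edges G"
      using bij_betwE[OF g] \<open>e \<in> edges H\<close> \<open>e' \<in> edges H\<close> by auto
    ultimately have "g e = g e'"
      by (rule inj_onD[OF inj])
    then show "e = e'"
      using inj_onD[OF bij_betw_imp_inj_on[OF g]] \<open>e \<in> edges H\<close> \<open>e' \<in> edges H\<close> by blast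
  qed
  moreover have "(c \<circ> f) (endp H e True) \<noteq> (c \<circ> f) (endp H e False)" if "e \<in> edges H" for e
    unfolding comp_apply
  proof (rule doubleton_eq_proper[where c = c])
    show "{endp G (g e) True, endp G (g e) False} = {f (endp H e True), f (endp H e False)}"
      using fg[OF that] by (simp add: ends_def)
    show "c (endp G (g e) True) \<noteq> c (endp G (g e) False)"
      using c bij_betwE[OF g] that by blast
  qed
  ultimately show ?thesis
    unfolding simple_bipartite_def by (intro conjI exI[where x = "c \<circ> f"]) blast+
qed

lemma graph_iso_by_vertex_bijection:
  assumes "wf_graph H" "bij_betw f (verts H) (verts G)" "inj_on (ends H) (edges H)"
    and "finite (edges G)" "card (edges H) = card (edges G)"
    and maps: "\<And>e. e \<in> edges H \<Longrightarrow> \<exists>e'\<in>edges G. ends G e' = f ` ends H e"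
  shows "graph_iso H G"
proof -
  define g where "g e = (SOME e'. e' \<in> edges G \<and> ends G e' = f ` ends H e)" for e
  have g: "g e \<in> edges G \<and> ends G (g e) = f ` ends H e" if "e \<in> edges H" for e
    unfolding g_def by (rule someI_ex) (use maps[OF that] in blast)
  have "inj_on g (edges H)"
  proof (rule inj_onI)
    fix e e' assume e: "e \<in> edges H" "e' \<in> edges H" "g e = g e'"
    have "ends H e \<subseteq> verts H" "ends H e' \<subseteq> verts H"
      using assms(1) e(1,2) by (auto simp: wf_graph_def ends_def)
    moreover have "f ` ends H e = f ` ends H e'"
      using g[OF e(1)] g[OF e(2)] e(3) by simp
    ultimately have "ends H e = ends H e'"
      using inj_on_image_eq_iff[OF bij_betw_imp_inj_on[OF assms(2)]] by blast
    then show "e = e'"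
      using inj_onD[OF assms(3)] e(1,2) by blast
  qed
  moreover have "g ` edges H = edges G"
  proof (rule card_subset_eq[OF assms(4)])
    show "g ` edges H \<subseteq> edges G"
      using g by blast
    show "card (g ` edges H) = card (edges G)"
      using card_image[OF \<open>inj_on g (edges H)\<close>] assms(5) by simp
  qed
  ultimately have "bij_betw g (edges H) (edges G)"
    unfolding bij_betw_def ..
  then show ?thesis
    unfolding graph_iso_ends using assms(2) g by blast
qed

section \<open>The cube\<close>

lemma Q3_verts: "verts Q3 = {..<8}" and Q3_edges: "edges Q3 = {..<12}"
  by (simp_all add: Q3_def atLeast0LessThan)

lemma lessThan_12: "{..<12::nat} = {0, 1, 2, 3, 4, 5, 6, 7, 8, 9, 10, 11}"
  by (simp add: lessThan_nat_numeral lessThan_Suc insert_commute)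

lemma lessThan_8: "{..<8::nat} = {0, 1, 2, 3, 4, 5, 6, 7}"
  by (simp add: lessThan_nat_numeral lessThan_Suc insert_commute)

lemma all_less_12:
  "(\<forall>e<12. P e) \<longleftrightarrow>
    P 0 \<and> P 1 \<and> P 2 \<and> P 3 \<and> P 4 \<and> P 5 \<and> P 6 \<and> P 7 \<and> P 8 \<and> P 9 \<and> P 10 \<and> P (11::nat)"
  using lessThan_12 by (simp only: lessThan_iff[symmetric, of _ 12] flip: Ball_def) simp

lemma Q3_endp [unfolded One_nat_def, simp]:
  "endp Q3 0 True = 0" "endp Q3 0 False = 1"
  "endp Q3 1 True = 2" "endp Q3 1 False = 3"
  "endp Q3 2 True = 4" "endp Q3 2 False = 5"
  "endp Q3 3 True = 6" "endp Q3 3 False = 7"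
  "endp Q3 4 True = 0" "endp Q3 4 False = 2"
  "endp Q3 5 True = 1" "endp Q3 5 False = 3"
  "endp Q3 6 True = 4" "endp Q3 6 False = 6"
  "endp Q3 7 True = 5" "endp Q3 7 False = 7"
  "endp Q3 8 True = 0" "endp Q3 8 False = 4"
  "endp Q3 9 True = 1" "endp Q3 9 False = 5"
  "endp Q3 10 True = 2" "endp Q3 10 False = 6"
  "endp Q3 11 True = 3" "endp Q3 11 False = 7"
  by (simp_all add: Q3_def q3_edge_list_def)

lemma Q3_endp_less_8: "e < 12 \<Longrightarrow> endp Q3 e b < 8"
  unfolding lessThan_iff[symmetric] lessThan_12 by (cases b) auto

lemma wf_graph_Q3: "wf_graph Q3"
  by (auto simp: wf_graph_def Q3_verts Q3_edges Q3_endp_less_8 lessThan_empty_iff)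

lemma Q3_tile_at [unfolded One_nat_def]:
  "tile_at Q3 lam 0 = {#lam 0 True, lam 4 True, lam 8 True#}"
  "tile_at Q3 lam 1 = {#lam 0 False, lam 5 True, lam 9 True#}"
  "tile_at Q3 lam 2 = {#lam 1 True, lam 4 False, lam 10 True#}"
  "tile_at Q3 lam 3 = {#lam 1 False, lam 5 False, lam 11 True#}"
  "tile_at Q3 lam 4 = {#lam 2 True, lam 6 True, lam 8 False#}"
  "tile_at Q3 lam 5 = {#lam 2 False, lam 7 True, lam 9 False#}"
  "tile_at Q3 lam 6 = {#lam 3 True, lam 6 False, lam 10 False#}"
  "tile_at Q3 lam 7 = {#lam 3 False, lam 7 False, lam 11 False#}"
  by (simp_all add: tile_at_def Q3_edges lessThan_12 add_mset_commute)

text \<open>Reading a vertex \<open>v < 8\<close> as a bit vector, \<open>Q3_odd v\<close> says that \<open>v\<close> has an odd number of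
  ones.\<close>

definition Q3_odd :: "nat \<Rightarrow> bool" where
  "Q3_odd v \<longleftrightarrow> v \<in> {1, 2, 4, 7}"

lemma simple_bipartite_Q3: "simple_bipartite Q3"
  unfolding simple_bipartite_def
proof
  show "inj_on (ends Q3) (edges Q3)"
    by (simp add: inj_on_def Q3_edges lessThan_12 ends_def doubleton_eq_iff)
  show "\<exists>c :: nat \<Rightarrow> bool. \<forall>e\<in>edges Q3. c (endp Q3 e True) \<noteq> c (endp Q3 e False)"
    by (rule exI[where x = Q3_odd]) (simp add: Q3_edges lessThan_12 Q3_odd_def)
qed

text \<open>Each face is given by its four edges.\<close>

definition Q3_faces :: "nat set set" where
  "Q3_faces =
    {{0, 1, 4, 5}, {2, 3, 6, 7}, {0, 2, 8, 9}, {1, 3, 10, 11}, {4, 6, 8, 10}, {5, 7, 9, 11}}"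

lemma Q3_faces_subset: "F \<in> Q3_faces \<Longrightarrow> F \<subseteq> {..<12}"
  by (auto simp: Q3_faces_def)

lemma Q3_edge_in_two_faces:
  assumes "e < 12"
  obtains F F' where "F \<in> Q3_faces" "F' \<in> Q3_faces" "e \<in> F" "e \<in> F'"
    "\<And>k. k \<in> F \<Longrightarrow> k \<in> F' \<Longrightarrow> k = e"
proof -
  have "\<exists>F\<in>Q3_faces. \<exists>F'\<in>Q3_faces. e \<in> F \<and> e \<in> F' \<and> (\<forall>k\<in>F. k \<in> F' \<longrightarrow> k = e)"
    using assms unfolding lessThan_iff[symmetric] lessThan_12 Q3_faces_def
    by (elim insertE emptyE; hypsubst; simp)
  then show ?thesis
    using that by blast
qed

text \<open>Around a face the colour changes an even number of times.\<close>

lemma Q3_face_improper: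
  fixes c :: "nat \<Rightarrow> bool"
  assumes "F \<in> Q3_faces" "e \<in> F" "c (endp Q3 e True) = c (endp Q3 e False)"
  shows "\<exists>e'\<in>F. e' \<noteq> e \<and> c (endp Q3 e' True) = c (endp Q3 e' False)"
  using assms unfolding Q3_faces_def
  by (elim insertE emptyE; simp only: insert_iff empty_iff simp_thms; elim disjE; hypsubst;
      simp; smt)

lemma Q3_colouring_proper_off_two_edges:
  fixes c :: "nat \<Rightarrow> bool"
  assumes proper: "\<And>e. e < 12 \<Longrightarrow> e \<noteq> e\<^sub>1 \<Longrightarrow> e \<noteq> e\<^sub>2 \<Longrightarrow> c (endp Q3 e True) \<noteq> c (endp Q3 e False)"
    and "e < 12"
  shows "c (endp Q3 e True) \<noteq> c (endp Q3 e False)"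
proof
  assume improper: "c (endp Q3 e True) = c (endp Q3 e False)"
  obtain F F' where F: "F \<in> Q3_faces" "F' \<in> Q3_faces" "e \<in> F" "e \<in> F'"
    and only_e: "\<And>k. k \<in> F \<Longrightarrow> k \<in> F' \<Longrightarrow> k = e"
    using Q3_edge_in_two_faces[OF \<open>e < 12\<close>] by blast
  obtain k where k: "k \<in> F" "k \<noteq> e" "c (endp Q3 k True) = c (endp Q3 k False)"
    using Q3_face_improper[OF F(1,3) improper] by blast
  obtain k' where k': "k' \<in> F'" "k' \<noteq> e" "c (endp Q3 k' True) = c (endp Q3 k' False)"
    using Q3_face_improper[OF F(2,4) improper] by blast
  have "k < 12" "k' < 12"
    using k(1) k'(1) F(1,2) Q3_faces_subset by blast+
  then have "e \<in> {e\<^sub>1, e\<^sub>2}" "k \<in> {e\<^sub>1, e\<^sub>2}" "k' \<in> {e\<^sub>1, e\<^sub>2}"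
    using proper improper k(3) k'(3) \<open>e < 12\<close> by blast+
  then have "k = k'"
    using k(2) k'(2) by auto
  then show False
    using only_e k(1,2) k'(1) by blast
qed

lemma Q3_proper_colouring_parity:
  fixes c :: "nat \<Rightarrow> bool"
  assumes "\<And>e. e < 12 \<Longrightarrow> c (endp Q3 e True) \<noteq> c (endp Q3 e False)" "u < 8" "v < 8"
  shows "c u = c v \<longleftrightarrow> Q3_odd u = Q3_odd v"
proof -
  have parity: "c v = c 0 \<longleftrightarrow> \<not> Q3_odd v" if "v < 8" for v
    using assms(1)[of 0] assms(1)[of 4] assms(1)[of 8] assms(1)[of 5] assms(1)[of 9] assms(1)[of 10]
      assms(1)[of 11] that
    unfolding lessThan_iff[symmetric] lessThan_8
    by (auto simp: Q3_odd_def)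
  show ?thesis
    using parity[OF assms(2)] parity[OF assms(3)] by blast
qed

text \<open>Vertices \<open>v\<close> and \<open>7 - v\<close> are antipodal.\<close>

lemma Q3_adjacent_or_antipodal:
  assumes "x < 8" "y < 8" "Q3_odd x \<noteq> Q3_odd y"
  shows "y = 7 - x \<or> (\<exists>k<12. ends Q3 k = {x, y})"
proof -
  have "y = 7 - x \<or> (\<exists>k\<in>{..<12}. ends Q3 k = {x, y})"
    using assms unfolding lessThan_iff[symmetric] lessThan_8 lessThan_12 Q3_odd_def ends_def
    by (elim insertE emptyE; simp add: doubleton_eq_iff)
  then show ?thesis
    by auto
qed

lemma Q3_edge_if_odd_not_antipodal:
  assumes "x < 8" "y < 8" "Q3_odd x \<noteq> Q3_odd y" "y \<noteq> 7 - x"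
  shows "\<exists>e\<in>edges Q3. ends Q3 e = {x, y}"
  using Q3_adjacent_or_antipodal[OF assms(1-3)] assms(4) by (auto simp: Q3_edges)

text \<open>In the last case \<open>(e', b')\<close> is the antipodal image of the partner of \<open>(e, b)\<close>.\<close>

definition Q3_swappable :: "nat \<Rightarrow> bool \<Rightarrow> nat \<Rightarrow> bool \<Rightarrow> bool" where
  "Q3_swappable e b e' b' \<longleftrightarrow>
     endp Q3 e b = endp Q3 e' b' \<or> endp Q3 e (\<not> b) = endp Q3 e' (\<not> b') \<or>
     (endp Q3 e' b' = 7 - endp Q3 e (\<not> b) \<and> endp Q3 e' (\<not> b') = 7 - endp Q3 e b)"

lemma Q3_swappable_if_simple_bipartite:
  assumes "i < 12" "j < 12" "i \<noteq> j" "simple_bipartite (swap_halfedges Q3 (i, b) (j, b'))"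
  shows "Q3_swappable i b j b'"
proof -
  let ?S = "swap_halfedges Q3 (i, b) (j, b')"
  define u\<^sub>1 v\<^sub>1 u\<^sub>2 v\<^sub>2
    where "u\<^sub>1 = endp Q3 i b" "v\<^sub>1 = endp Q3 i (\<not> b)" "u\<^sub>2 = endp Q3 j b'" "v\<^sub>2 = endp Q3 j (\<not> b')"
  have less_8: "u\<^sub>1 < 8" "v\<^sub>1 < 8" "u\<^sub>2 < 8" "v\<^sub>2 < 8"
    using assms(1,2) by (simp_all add: u\<^sub>1_v\<^sub>1_u\<^sub>2_v\<^sub>2_def Q3_endp_less_8)
  have ends_S: "ends ?S i = {u\<^sub>2, v\<^sub>1}" "ends ?S j = {u\<^sub>1, v\<^sub>2}"
    "\<And>k. k \<noteq> i \<Longrightarrow> k \<noteq> j \<Longrightarrow> ends ?S k = ends Q3 k"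
    using ends_swap_halfedges[OF assms(3)] by (simp_all add: u\<^sub>1_v\<^sub>1_u\<^sub>2_v\<^sub>2_def)
  obtain c :: "nat \<Rightarrow> bool" where c: "\<And>e. e < 12 \<Longrightarrow> c (endp ?S e True) \<noteq> c (endp ?S e False)"
    and inj: "inj_on (ends ?S) {..<12}"
    using assms(4) by (auto simp: simple_bipartite_def swap_halfedges_def Q3_edges)
  have proper_S: "c x \<noteq> c y" if "e < 12" "ends ?S e = {x, y}" for e x y
    using doubleton_eq_proper[OF that(2)[unfolded ends_def] c[OF that(1)]] .
  have "c (endp Q3 e True) \<noteq> c (endp Q3 e False)" if "e < 12" for e
  proof (rule Q3_colouring_proper_off_two_edges[OF _ that])
    fix k assume "k < 12" "k \<noteq> i" "k \<noteq> j"
    then show "c (endp Q3 k True) \<noteq> c (endp Q3 k False)"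
      using proper_S[of k] ends_S(3) by (simp add: ends_def)
  qed
  then have odd: "Q3_odd v\<^sub>1 \<noteq> Q3_odd u\<^sub>2" "Q3_odd u\<^sub>1 \<noteq> Q3_odd v\<^sub>2"
    using Q3_proper_colouring_parity less_8 proper_S[OF assms(1) ends_S(1)]
      proper_S[OF assms(2) ends_S(2)]
    by blast+
  have other_edge: "k = i \<or> k = j" if "k < 12" "ends Q3 k = ends ?S i \<or> ends Q3 k = ends ?S j" for k
    using inj_onD[OF inj, of k i] inj_onD[OF inj, of k j] ends_S(3)[of k] that assms(1,2) by force
  have Q3_ends: "ends Q3 i = {u\<^sub>1, v\<^sub>1}" "ends Q3 j = {u\<^sub>2, v\<^sub>2}"
    using ends_eq by (simp_all add: u\<^sub>1_v\<^sub>1_u\<^sub>2_v\<^sub>2_def)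
  have "u\<^sub>1 = u\<^sub>2 \<or> v\<^sub>1 = v\<^sub>2 \<or> u\<^sub>2 = 7 - v\<^sub>1"
    using Q3_adjacent_or_antipodal[OF less_8(2,3) odd(1)]
  proof (elim disjE exE conjE)
    fix k assume "k < 12" "ends Q3 k = {v\<^sub>1, u\<^sub>2}"
    then have "k = i \<or> k = j"
      using other_edge ends_S by (simp add: insert_commute)
    then show ?thesis
      using \<open>ends Q3 k = {v\<^sub>1, u\<^sub>2}\<close> Q3_ends by (auto simp: doubleton_eq_iff)
  qed simp
  moreover have "u\<^sub>1 = u\<^sub>2 \<or> v\<^sub>1 = v\<^sub>2 \<or> v\<^sub>2 = 7 - u\<^sub>1"
    using Q3_adjacent_or_antipodal[OF less_8(1,4) odd(2)]
  proof (elim disjE exE conjE)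
    fix k assume "k < 12" "ends Q3 k = {u\<^sub>1, v\<^sub>2}"
    then have "k = i \<or> k = j"
      using other_edge ends_S by simp
    then show ?thesis
      using \<open>ends Q3 k = {u\<^sub>1, v\<^sub>2}\<close> Q3_ends by (auto simp: doubleton_eq_iff)
  qed simp
  ultimately show ?thesis
    unfolding Q3_swappable_def u\<^sub>1_v\<^sub>1_u\<^sub>2_v\<^sub>2_def by blast
qed

section \<open>Four symbols do not suffice\<close>

lemma realizes_scen3_Q3_swappable:
  assumes "realizes_scen3 P Q3" "assembly_design Q3 lam" "pot_of_design Q3 lam \<subseteq> P"
    and "i < 12" "j < 12" "i \<noteq> j" "lam i b = lam j b'"
  shows "Q3_swappable i b j b'"
proof (rule Q3_swappable_if_simple_bipartite[OF assms(4-6)])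
  have "graph_iso (swap_halfedges Q3 (i, b) (j, b')) Q3"
    using realizes_scen3_swap_halfedges[OF assms(1) wf_graph_Q3 assms(2,3)] assms(4,5,7)
    by (simp add: Q3_edges)
  then show "simple_bipartite (swap_halfedges Q3 (i, b) (j, b'))"
    using simple_bipartite_graph_iso simple_bipartite_Q3 by blast
qed

definition K33 :: graph where
  "K33 = \<lparr>verts = {..<6}, edges = {..<9}, endp = (\<lambda>e b. if b then e div 3 else 3 + e mod 3)\<rparr>"

lemma realizes_K33:
  assumes "{#x, x, x#} \<in> P" "{#y, y, y#} \<in> P" "{#z, z, z#} \<in> P" "{#hatc x, hatc y, hatc z#} \<in> P"
  shows "realizes P K33"
  unfolding realizes_def
proof (intro exI conjI)
  define lam where "lam e b = (let w = [x, y, z] ! (e div 3) in if b then w else hatc w)" for e b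
  show "assembly_design K33 lam"
    by (simp add: assembly_design_def K33_def lam_def Let_def)
  have "{..<9::nat} = {0, 1, 2, 3, 4, 5, 6, 7, 8}" and "{..<6::nat} = {0, 1, 2, 3, 4, 5}"
    by (simp_all add: lessThan_nat_numeral lessThan_Suc insert_commute)
  then show "pot_of_design K33 lam \<subseteq> P"
    using assms by (simp add: pot_of_design_def tile_at_def K33_def lam_def add_mset_commute)
qed

lemma realizes_scen3_Q3_no_K33_tiles:
  assumes "realizes_scen3 P Q3"
    and "{#x, x, x#} \<in> P" "{#y, y, y#} \<in> P" "{#z, z, z#} \<in> P" "{#hatc x, hatc y, hatc z#} \<in> P"
  shows False
proof -
  have "wf_graph K33"
    by (auto simp: wf_graph_def K33_def lessThan_empty_iff)
  then have "card (verts Q3) \<le> card (verts K33)"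
    using assms(1) realizes_K33[OF assms(2-5)] unfolding realizes_scen3_def by blast
  then show False
    by (simp add: Q3_verts K33_def)
qed

fun unhatted :: "cet \<Rightarrow> bool" where
  "unhatted (Unh a) = True"
| "unhatted (Hat a) = False"

lemma unhatted_hatc [simp]: "unhatted (hatc x) = (\<not> unhatted x)"
  by (cases x) auto

lemma cet_eq_iff: "x = y \<longleftrightarrow> symbol x = symbol y \<and> unhatted x = unhatted y"
  by (cases x; cases y) auto

text \<open>Here \<open>x e\<close> is the label at the smaller end of edge \<open>e\<close>, and the edges \<open>0, 1, 6, 7\<close> form a
  perfect matching. The constraints force four stars, each carrying a single symbol, centred at
  \<open>{0, 3, 5, 6}\<close> or at \<open>{1, 2, 4, 7}\<close>; the two cases record three of these stars.\<close>

lemma Q3_four_symbol_labelling: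
  fixes x :: "nat \<Rightarrow> cet"
  assumes swappable: "\<And>i j b. i < j \<Longrightarrow> j < 12 \<Longrightarrow> x i = (if b then x j else hatc (x j)) \<Longrightarrow>
      Q3_swappable i True j b"
    and four: "\<And>e. e < 12 \<Longrightarrow> symbol (x e) \<in> {symbol (x 0), symbol (x 1), symbol (x 6), symbol (x 7)}"
  shows "(x 5 = x 1 \<and> x 11 = hatc (x 1) \<and> x 9 = x 2 \<and> x 7 = hatc (x 2) \<and>
      x 10 = x 6 \<and> x 3 = hatc (x 6)) \<or>
    (x 9 = x 5 \<and> x 0 = hatc (x 5) \<and> x 10 = x 1 \<and> x 4 = hatc (x 1) \<and>
      x 6 = x 2 \<and> x 8 = hatc (x 2))"
proof -
  have "\<forall>j<12. \<forall>i<12. i < j \<longrightarrow> (x i = x j \<longrightarrow> Q3_swappable i True j True) \<and>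
      (x i = hatc (x j) \<longrightarrow> Q3_swappable i True j False)"
    using swappable[of _ _ True] swappable[of _ _ False] by simp
  moreover have "\<forall>e<12. symbol (x e) \<in> {symbol (x 0), symbol (x 1), symbol (x 6), symbol (x 7)}"
    using four by blast
  ultimately show ?thesis
    unfolding all_less_12 Q3_swappable_def
    by (simp; simp only: cet_eq_iff[of "x _"] symbol_hatc unhatted_hatc; smt (z3))
qed

lemma realizes_scen3_Q3_symbols:
  assumes scen3: "realizes_scen3 P Q3" and design: "assembly_design Q3 lam"
    and tiles: "pot_of_design Q3 lam \<subseteq> P" and few: "card (sigma_of P) \<le> 4" and "e < 12"
  shows "symbol (lam e True) \<in>
    {symbol (lam 0 True), symbol (lam 1 True), symbol (lam 6 True), symbol (lam 7 True)}"
proof -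
  let ?S = "{symbol (lam 0 True), symbol (lam 1 True), symbol (lam 6 True), symbol (lam 7 True)}"
  have symbol_in: "symbol (lam k True) \<in> sigma_of P" if "k < 12" for k
  proof (rule symbol_in_sigma_of)
    show "tile_at Q3 lam (endp Q3 k True) \<in> P"
      using tiles that Q3_endp_less_8 by (auto simp: pot_of_design_def Q3_verts)
    show "lam k True \<in># tile_at Q3 lam (endp Q3 k True)"
      using label_in_tile_at[of Q3 k] that by (simp add: Q3_edges)
  qed
  have "symbol (lam i True) \<noteq> symbol (lam j True)"
    if "(i, j) \<in> {(0, 1), (0, 6), (0, 7), (1, 6), (1, 7), (6, 7)}" for i j
    using realizes_scen3_Q3_swappable[OF scen3 design tiles, of i j True True]
      realizes_scen3_Q3_swappable[OF scen3 design tiles, of i j True False]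
      assembly_design_hatc[OF design, of j True] that
    by (auto simp: symbol_eq_iff Q3_swappable_def Q3_edges)
  then have "card ?S = 4"
    by simp
  moreover have "?S \<subseteq> sigma_of P"
    using symbol_in by simp
  moreover have "finite (sigma_of P)"
    using scen3 finite_sigma_of unfolding realizes_scen3_def is_pot_def by blast
  ultimately have "?S = sigma_of P"
    using few by (metis card_seteq)
  then show ?thesis
    using symbol_in[OF \<open>e < 12\<close>] by simp
qed

lemma realizes_scen3_Q3_K33_tiles:
  assumes scen3: "realizes_scen3 P Q3" and design: "assembly_design Q3 lam"
    and tiles: "pot_of_design Q3 lam \<subseteq> P" and few: "card (sigma_of P) \<le> 4"
  obtains x y z
  where "{#x, x, x#} \<in> P" "{#y, y, y#} \<in> P" "{#z, z, z#} \<in> P" "{#hatc x, hatc y, hatc z#} \<in> P"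
proof -
  define x where "x e = lam e True" for e
  have lam_simps: "lam e True = x e" "lam e False = hatc (x e)" if "e < 12" for e
    using assembly_design_hatc[OF design, of e True] that by (simp_all add: x_def Q3_edges)
  have "(x 5 = x 1 \<and> x 11 = hatc (x 1) \<and> x 9 = x 2 \<and> x 7 = hatc (x 2) \<and>
      x 10 = x 6 \<and> x 3 = hatc (x 6)) \<or>
    (x 9 = x 5 \<and> x 0 = hatc (x 5) \<and> x 10 = x 1 \<and> x 4 = hatc (x 1) \<and>
      x 6 = x 2 \<and> x 8 = hatc (x 2))"
  proof (rule Q3_four_symbol_labelling)
    show "Q3_swappable i True j b"
      if "i < j" "j < 12" "x i = (if b then x j else hatc (x j))" for i j b
      using realizes_scen3_Q3_swappable[OF scen3 design tiles, of i j True b] that lam_simps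
      by (cases b) simp_all
    show "symbol (x e) \<in> {symbol (x 0), symbol (x 1), symbol (x 6), symbol (x 7)}" if "e < 12" for e
      using realizes_scen3_Q3_symbols[OF scen3 design tiles few that] by (simp add: x_def)
  qed
  moreover have tile: "tile_at Q3 lam v \<in> P" if "v < 8" for v
    using tiles that by (auto simp: pot_of_design_def Q3_verts)
  ultimately show ?thesis
    \<comment> \<open>the centres \<open>3, 5, 6\<close> share the neighbour \<open>7\<close>, the centres \<open>1, 2, 4\<close> the neighbour \<open>0\<close>\<close>
  proof (elim disjE)
    assume "x 5 = x 1 \<and> x 11 = hatc (x 1) \<and> x 9 = x 2 \<and> x 7 = hatc (x 2) \<and>
      x 10 = x 6 \<and> x 3 = hatc (x 6)"
    then show ?thesis
      using that[of "hatc (x 1)" "hatc (x 2)" "hatc (x 6)"]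
        tile[of 3] tile[of 5] tile[of 6] tile[of 7]
      by (simp add: Q3_tile_at lam_simps add_mset_commute)
  next
    assume "x 9 = x 5 \<and> x 0 = hatc (x 5) \<and> x 10 = x 1 \<and> x 4 = hatc (x 1) \<and>
      x 6 = x 2 \<and> x 8 = hatc (x 2)"
    then show ?thesis
      using that[of "x 5" "x 1" "x 2"] tile[of 0] tile[of 1] tile[of 2] tile[of 4]
      by (simp add: Q3_tile_at lam_simps add_mset_commute)
  qed
qed

theorem card_sigma_of_ge_5_if_realizes_scen3_Q3:
  assumes scen3: "realizes_scen3 P Q3"
  shows "card (sigma_of P) \<ge> 5"
proof (rule ccontr)
  assume "\<not> card (sigma_of P) \<ge> 5"
  then have few: "card (sigma_of P) \<le> 4"
    by simp
  obtain lam where design: "assembly_design Q3 lam" and tiles: "pot_of_design Q3 lam \<subseteq> P"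
    using scen3 unfolding realizes_scen3_def realizes_def by blast
  obtain x y z
    where "{#x, x, x#} \<in> P" "{#y, y, y#} \<in> P" "{#z, z, z#} \<in> P" "{#hatc x, hatc y, hatc z#} \<in> P"
    by (rule realizes_scen3_Q3_K33_tiles[OF scen3 design tiles few])
  then show False
    by (rule realizes_scen3_Q3_no_K33_tiles[OF scen3])
qed

section \<open>A pot with five symbols\<close>

definition TA0 :: tile where "TA0 = {#Unh 0, Unh 0, Unh 0#}"

definition TA1 :: tile where "TA1 = {#Unh 1, Unh 3, Unh 4#}"

definition TA2 :: tile where "TA2 = {#Unh 2, Unh 2, Unh 2#}"

definition TB0 :: tile where "TB0 = {#Hat 0, Hat 1, Hat 2#}"

definition TB1 :: tile where "TB1 = {#Hat 2, Hat 4, Hat 4#}"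

definition TB2 :: tile where "TB2 = {#Hat 0, Hat 3, Hat 3#}"

definition Q3_pot :: "tile set" where
  "Q3_pot = {TA0, TA1, TA2, TB0, TB1, TB2}"

lemmas Q3_pot_tiles = TA0_def TA1_def TA2_def TB0_def TB1_def TB2_def

lemma Q3_pot_tiles_distinct:
  "TA0 \<noteq> TA1" "TA0 \<noteq> TA2" "TA0 \<noteq> TB0" "TA0 \<noteq> TB1" "TA0 \<noteq> TB2"
  "TA1 \<noteq> TA2" "TA1 \<noteq> TB0" "TA1 \<noteq> TB1" "TA1 \<noteq> TB2"
  "TA2 \<noteq> TB0" "TA2 \<noteq> TB1" "TA2 \<noteq> TB2"
  "TB0 \<noteq> TB1" "TB0 \<noteq> TB2" "TB1 \<noteq> TB2"
  by (simp_all add: Q3_pot_tiles add_eq_conv_ex)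

lemma mem_Q3_pot_tiles:
  "x \<in># TA0 \<longleftrightarrow> x = Unh 0" "x \<in># TA1 \<longleftrightarrow> x \<in> {Unh 1, Unh 3, Unh 4}" "x \<in># TA2 \<longleftrightarrow> x = Unh 2"
  "x \<in># TB0 \<longleftrightarrow> x \<in> {Hat 0, Hat 1, Hat 2}" "x \<in># TB1 \<longleftrightarrow> x \<in> {Hat 2, Hat 4}"
  "x \<in># TB2 \<longleftrightarrow> x \<in> {Hat 0, Hat 3}"
  by (auto simp: Q3_pot_tiles)

lemma is_pot_Q3_pot: "is_pot Q3_pot"
  by (auto simp: is_pot_def Q3_pot_def Q3_pot_tiles)

lemma sigma_of_Q3_pot: "sigma_of Q3_pot = {0, 1, 2, 3, 4}"
  by (auto simp: sigma_of_def Q3_pot_def Q3_pot_tiles)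

lemma realizes_Q3_pot_Q3: "realizes Q3_pot Q3"
  unfolding realizes_def
proof (intro exI conjI)
  define x where
    "x = [Unh 0, Hat 1, Hat 1, Unh 2, Unh 0, Hat 3, Hat 2, Unh 4, Unh 0, Hat 3, Hat 2, Unh 4]"
  show "assembly_design Q3 (\<lambda>e b. if b then x ! e else hatc (x ! e))"
    by (simp add: assembly_design_def)
  show "pot_of_design Q3 (\<lambda>e b. if b then x ! e else hatc (x ! e)) \<subseteq> Q3_pot"
    by (simp add: pot_of_design_def Q3_verts lessThan_8 Q3_tile_at x_def Q3_pot_def Q3_pot_tiles
        add_mset_commute)
qed

lemma sum_fibres:
  assumes "finite V" "finite T" "f ` V \<subseteq> T"
  shows "(\<Sum>v\<in>V. h (f v)) = (\<Sum>t\<in>T. card {v\<in>V. f v = t} * h t)"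
proof -
  have "(\<Sum>v\<in>V. h (f v)) = (\<Sum>t\<in>T. \<Sum>v\<in>{v\<in>V. f v = t}. h (f v))"
    using sum.group[OF assms, of "h \<circ> f"] by simp
  also have "\<dots> = (\<Sum>t\<in>T. card {v\<in>V. f v = t} * h t)"
    by (rule sum.cong) auto
  finally show ?thesis .
qed

lemma sum_Q3_pot: "(\<Sum>t\<in>Q3_pot. g t) = g TA0 + g TA1 + g TA2 + g TB0 + g TB1 + g TB2"
  unfolding Q3_pot_def using Q3_pot_tiles_distinct by (simp add: add.assoc)

text \<open>Balancing each of the five symbols determines the tile counts of any assembly.\<close>

lemma Q3_pot_tile_counts:
  assumes "wf_graph H" "assembly_design H lam" "pot_of_design H lam \<subseteq> Q3_pot"
  defines "n t \<equiv> card {v\<in>verts H. tile_at H lam v = t}"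
  shows "card (verts H) = 8 * n TB1" "n TA0 = n TB1" "n TA1 = 2 * n TB1" "n TA2 = n TB1"
    "n TB0 = 2 * n TB1" "n TB2 = n TB1"
proof -
  have fin: "finite (verts H)"
    using assms(1) by (simp add: wf_graph_def)
  have into: "tile_at H lam ` verts H \<subseteq> Q3_pot"
    using assms(3) by (simp add: pot_of_design_def)
  have fin_pot: "finite Q3_pot"
    by (simp add: Q3_pot_def)
  have balance: "(\<Sum>t\<in>Q3_pot. n t * count t (Unh a)) = (\<Sum>t\<in>Q3_pot. n t * count t (Hat a))" for a
    using count_unhatted_eq_count_hatted[OF assms(1,2), of a]
      sum_fibres[OF fin fin_pot into, of "\<lambda>t. count t (Unh a)"]
      sum_fibres[OF fin fin_pot into, of "\<lambda>t. count t (Hat a)"]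
    unfolding n_def by simp
  have "3 * n TA0 = n TB0 + n TB2" "n TA1 = n TB0" "3 * n TA2 = n TB0 + n TB1"
    "n TA1 = 2 * n TB2" "n TA1 = 2 * n TB1"
    using balance[of 0] balance[of 1] balance[of 2] balance[of 3] balance[of 4]
    unfolding sum_Q3_pot by (simp_all add: Q3_pot_tiles)
  moreover have "card (verts H) = n TA0 + n TA1 + n TA2 + n TB0 + n TB1 + n TB2"
    using sum_fibres[OF fin fin_pot into, of "\<lambda>_. 1"] unfolding sum_Q3_pot n_def by simp
  ultimately show "card (verts H) = 8 * n TB1" "n TA0 = n TB1" "n TA1 = 2 * n TB1" "n TA2 = n TB1"
    "n TB0 = 2 * n TB1" "n TB2 = n TB1"
    by linarith+
qed

text \<open>A triple \<open>(t, a, t')\<close> records an edge labelled \<open>a\<close> at a tile \<open>t\<close> and \<open>\<hat>a\<close> at a tile \<open>t'\<close>.\<close>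

definition Q3_pot_bonds :: "(tile \<times> nat \<times> tile) set" where
  "Q3_pot_bonds = {(TA0, 0, TB0), (TA0, 0, TB2), (TA1, 1, TB0), (TA1, 3, TB2), (TA1, 4, TB1),
     (TA2, 2, TB0), (TA2, 2, TB1)}"

lemma Q3_pot_bond: "t \<in> Q3_pot \<Longrightarrow> t' \<in> Q3_pot \<Longrightarrow> Unh a \<in># t \<Longrightarrow> Hat a \<in># t' \<Longrightarrow> (t, a, t') \<in> Q3_pot_bonds"
  unfolding Q3_pot_def Q3_pot_bonds_def
  by (elim insertE emptyE; hypsubst; auto simp: mem_Q3_pot_tiles)

lemma Q3_pot_bond_sides_distinct: "(t, a, t') \<in> Q3_pot_bonds \<Longrightarrow> (s, a', s') \<in> Q3_pot_bonds \<Longrightarrow> t \<noteq> s'"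
  using Q3_pot_tiles_distinct by (auto simp: Q3_pot_bonds_def)

lemma Q3_pot_bond_unique: "(t, a, t') \<in> Q3_pot_bonds \<Longrightarrow> (t, a', t') \<in> Q3_pot_bonds \<Longrightarrow> a = a'"
  using Q3_pot_tiles_distinct by (auto simp: Q3_pot_bonds_def)

lemma Q3_pot_bond_count_eq_1: "(t, a, t') \<in> Q3_pot_bonds \<Longrightarrow> count t (Unh a) = 1 \<or> count t' (Hat a) = 1"
  by (auto simp: Q3_pot_bonds_def Q3_pot_tiles)

lemma Q3_pot_edge_bond:
  assumes "wf_graph H" "pot_of_design H lam \<subseteq> Q3_pot"
    and "e \<in> edges H" "lam e b = Unh a" "lam e (\<not> b) = Hat a"
  shows "(tile_at H lam (endp H e b), a, tile_at H lam (endp H e (\<not> b))) \<in> Q3_pot_bonds"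
proof (rule Q3_pot_bond)
  have fin: "finite (edges H)" and ends: "endp H e c \<in> verts H" for c
    using assms(1,3) by (auto simp: wf_graph_def)
  show "tile_at H lam (endp H e b) \<in> Q3_pot" "tile_at H lam (endp H e (\<not> b)) \<in> Q3_pot"
    using assms(2) ends by (auto simp: pot_of_design_def)
  show "Unh a \<in># tile_at H lam (endp H e b)" "Hat a \<in># tile_at H lam (endp H e (\<not> b))"
    using label_in_tile_at[OF fin assms(3)] assms(4,5) by metis+
qed

lemma Q3_pot_inj_on_ends:
  assumes "wf_graph H" "assembly_design H lam" "pot_of_design H lam \<subseteq> Q3_pot"
  shows "inj_on (ends H) (edges H)"
proof (rule inj_onI)
  fix e e' assume e: "e \<in> edges H" "e' \<in> edges H" "ends H e = ends H e'"
  let ?\<tau> = "tile_at H lam"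
  have fin: "finite (edges H)"
    using assms(1) by (simp add: wf_graph_def)
  obtain b a where lab: "lam e b = Unh a" "lam e (\<not> b) = Hat a"
    using assembly_design_unhatted_end[OF assms(2) e(1)] .
  obtain b' a' where lab': "lam e' b' = Unh a'" "lam e' (\<not> b') = Hat a'"
    using assembly_design_unhatted_end[OF assms(2) e(2)] .
  note bond = Q3_pot_edge_bond[OF assms(1,3) e(1) lab]
    and bond' = Q3_pot_edge_bond[OF assms(1,3) e(2) lab']
  have "endp H e b \<noteq> endp H e' (\<not> b')" "endp H e' b' \<noteq> endp H e (\<not> b)"
    using Q3_pot_bond_sides_distinct[OF bond bond'] Q3_pot_bond_sides_distinct[OF bond' bond] by auto
  moreover have "{endp H e b, endp H e (\<not> b)} = {endp H e' b', endp H e' (\<not> b')}"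
    using e(3) by (simp flip: ends_eq)
  ultimately have same: "endp H e b = endp H e' b'" "endp H e (\<not> b) = endp H e' (\<not> b')"
    by (auto simp: doubleton_eq_iff)
  then have "(?\<tau> (endp H e b), a', ?\<tau> (endp H e (\<not> b))) \<in> Q3_pot_bonds"
    using bond' by simp
  then have "a' = a"
    using Q3_pot_bond_unique bond by blast
  from Q3_pot_bond_count_eq_1[OF bond] show "e = e'"
  proof
    assume "count (?\<tau> (endp H e b)) (Unh a) = 1"
    then have "(e, b) = (e', b')"
      by (intro half_edges_eq_if_count_le_1[of H lam "endp H e b" "Unh a"])
        (use fin e(1,2) lab(1) lab'(1) same(1) \<open>a' = a\<close> in simp_all)
    then show "e = e'"
      by simp
  next
    assume "count (?\<tau> (endp H e (\<not> b))) (Hat a) = 1"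
    then have "(e, \<not> b) = (e', \<not> b')"
      by (intro half_edges_eq_if_count_le_1[of H lam "endp H e (\<not> b)" "Hat a"])
        (use fin e(1,2) lab(2) lab'(2) same(2) \<open>a' = a\<close> in simp_all)
    then show "e = e'"
      by simp
  qed
qed

lemma Q3_pot_symbol_1_matching:
  assumes wf: "wf_graph H" and design: "assembly_design H lam" and pot: "pot_of_design H lam \<subseteq> Q3_pot"
    and e: "e \<in> edges H" "lam e b = Unh 1" and e': "e' \<in> edges H" "lam e' b' = Unh 1"
  shows "endp H e b = endp H e' b' \<longleftrightarrow> endp H e (\<not> b) = endp H e' (\<not> b')"
proof -
  have fin: "finite (edges H)"
    using wf by (simp add: wf_graph_def)
  have once: "count (tile_at H lam v) (Unh 1) \<le> 1" "count (tile_at H lam v) (Hat 1) \<le> 1"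
    if "v \<in> verts H" for v
    using pot that by (auto simp: pot_of_design_def Q3_pot_def Q3_pot_tiles)
  have ends: "endp H e c \<in> verts H" for c
    using wf e(1) by (simp add: wf_graph_def)
  have hat: "lam e (\<not> b) = Hat 1" "lam e' (\<not> b') = Hat 1"
    using assembly_design_hatc[OF design] e e' by simp_all
  show ?thesis
  proof
    assume "endp H e b = endp H e' b'"
    then have "(e, b) = (e', b')"
      using half_edges_eq_if_count_le_1[OF fin once(1)[OF ends] e(1) refl e(2) e'(1)] e'(2) by simp
    then show "endp H e (\<not> b) = endp H e' (\<not> b')"
      by simp
  next
    assume "endp H e (\<not> b) = endp H e' (\<not> b')"
    then have "(e, \<not> b) = (e', \<not> b')"
      using half_edges_eq_if_count_le_1[OF fin once(2)[OF ends] e(1) refl hat(1) e'(1)] hat(2)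
      by simp
    then show "endp H e b = endp H e' b'"
      by simp
  qed
qed

lemma Q3_pot_eight_vertices:
  assumes wf: "wf_graph H" and design: "assembly_design H lam" and pot: "pot_of_design H lam \<subseteq> Q3_pot"
    and eight: "card (verts H) = 8"
  obtains x\<^sub>0 r p\<^sub>1 y\<^sub>1 p\<^sub>2 y\<^sub>2 z q where
    "verts H = {x\<^sub>0, r, p\<^sub>1, y\<^sub>1, p\<^sub>2, y\<^sub>2, z, q}" "distinct [x\<^sub>0, r, p\<^sub>1, y\<^sub>1, p\<^sub>2, y\<^sub>2, z, q]"
    "tile_at H lam x\<^sub>0 = TA0" "tile_at H lam r = TB2" "tile_at H lam p\<^sub>1 = TB0" "tile_at H lam y\<^sub>1 = TA1"
    "tile_at H lam p\<^sub>2 = TB0" "tile_at H lam y\<^sub>2 = TA1" "tile_at H lam z = TA2" "tile_at H lam q = TB1"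
    "\<exists>e b. e \<in> edges H \<and> endp H e b = y\<^sub>1 \<and> endp H e (\<not> b) = p\<^sub>1 \<and> lam e b = Unh 1"
proof -
  let ?\<tau> = "tile_at H lam"
  define C where "C t = {v\<in>verts H. ?\<tau> v = t}" for t
  have "card (C TA0) = 1" "card (C TA1) = 2" "card (C TA2) = 1"
    "card (C TB0) = 2" "card (C TB1) = 1" "card (C TB2) = 1"
    using Q3_pot_tile_counts[OF wf design pot, folded C_def] eight by simp_all
  then obtain x\<^sub>0 y\<^sub>1 y\<^sub>2 z p p' q r where C: "C TA0 = {x\<^sub>0}" "C TA1 = {y\<^sub>1, y\<^sub>2}" "C TA2 = {z}"
    "C TB0 = {p, p'}" "C TB1 = {q}" "C TB2 = {r}" and "y\<^sub>1 \<noteq> y\<^sub>2" "p \<noteq> p'"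
    by (auto simp: card_1_singleton_iff card_2_iff)
  then have "?\<tau> y\<^sub>1 = TA1"
    by (auto simp: C_def)
  then have "Unh 1 \<in># ?\<tau> y\<^sub>1"
    by (simp add: mem_Q3_pot_tiles)
  then obtain e b where e: "e \<in> edges H" "endp H e b = y\<^sub>1" "lam e b = Unh 1"
    using in_tile_atE wf unfolding wf_graph_def by metis
  define p\<^sub>1 where "p\<^sub>1 = endp H e (\<not> b)"
  have "lam e (\<not> b) = Hat 1"
    using assembly_design_hatc[OF design e(1), of b] e(3) by simp
  then have "(TA1, 1, ?\<tau> p\<^sub>1) \<in> Q3_pot_bonds"
    using Q3_pot_edge_bond[OF wf pot e(1,3)] e(2) \<open>?\<tau> y\<^sub>1 = TA1\<close> by (simp add: p\<^sub>1_def)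
  then have "p\<^sub>1 \<in> C TB0"
    using wf e(1) Q3_pot_tiles_distinct by (simp add: Q3_pot_bonds_def C_def wf_graph_def p\<^sub>1_def)
  then obtain p\<^sub>2 where p: "C TB0 = {p\<^sub>1, p\<^sub>2}" "p\<^sub>1 \<noteq> p\<^sub>2"
    using C(4) \<open>p \<noteq> p'\<close> by auto
  have tiles: "?\<tau> x\<^sub>0 = TA0" "?\<tau> r = TB2" "?\<tau> p\<^sub>1 = TB0" "?\<tau> y\<^sub>1 = TA1" "?\<tau> p\<^sub>2 = TB0" "?\<tau> y\<^sub>2 = TA1"
    "?\<tau> z = TA2" "?\<tau> q = TB1"
    using C p by (auto simp: C_def)
  have "verts H = C TA0 \<union> C TB2 \<union> C TB0 \<union> C TA1 \<union> C TA2 \<union> C TB1"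
    using pot by (auto simp: C_def pot_of_design_def Q3_pot_def)
  then have "verts H = {x\<^sub>0, r, p\<^sub>1, y\<^sub>1, p\<^sub>2, y\<^sub>2, z, q}"
    using C p by auto
  moreover have "distinct [x\<^sub>0, r, p\<^sub>1, y\<^sub>1, p\<^sub>2, y\<^sub>2, z, q]"
    using tiles Q3_pot_tiles_distinct \<open>y\<^sub>1 \<noteq> y\<^sub>2\<close> p(2) by auto
  moreover have "\<exists>e b. e \<in> edges H \<and> endp H e b = y\<^sub>1 \<and> endp H e (\<not> b) = p\<^sub>1 \<and> lam e b = Unh 1"
    using e p\<^sub>1_def by blast
  ultimately show ?thesis
    using that tiles by metis
qed

text \<open>The tiles that the assembly of \<open>Q3\<close> in \<open>realizes_Q3_pot_Q3\<close> places at the eight vertices.\<close>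

definition Q3_vertex_tile :: "nat \<Rightarrow> tile" where
  "Q3_vertex_tile v = [TA0, TB2, TB0, TA1, TB0, TA1, TA2, TB1] ! v"

lemma Q3_pot_eight_vertices_map:
  assumes wf: "wf_graph H" and design: "assembly_design H lam" and pot: "pot_of_design H lam \<subseteq> Q3_pot"
    and eight: "card (verts H) = 8"
  obtains f where "bij_betw f (verts H) (verts Q3)"
    "\<And>w. w \<in> verts H \<Longrightarrow> tile_at H lam w = Q3_vertex_tile (f w)"
    "\<And>e b. e \<in> edges H \<Longrightarrow> lam e b = Unh 1 \<Longrightarrow> f (endp H e b) = 3 \<longleftrightarrow> f (endp H e (\<not> b)) = 2"
proof -
  obtain x\<^sub>0 r p\<^sub>1 y\<^sub>1 p\<^sub>2 y\<^sub>2 z q where V: "verts H = {x\<^sub>0, r, p\<^sub>1, y\<^sub>1, p\<^sub>2, y\<^sub>2, z, q}"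
    and dist: "distinct [x\<^sub>0, r, p\<^sub>1, y\<^sub>1, p\<^sub>2, y\<^sub>2, z, q]"
    and tiles: "tile_at H lam x\<^sub>0 = TA0" "tile_at H lam r = TB2" "tile_at H lam p\<^sub>1 = TB0"
      "tile_at H lam y\<^sub>1 = TA1" "tile_at H lam p\<^sub>2 = TB0" "tile_at H lam y\<^sub>2 = TA1" "tile_at H lam z = TA2"
      "tile_at H lam q = TB1"
    and "\<exists>e b. e \<in> edges H \<and> endp H e b = y\<^sub>1 \<and> endp H e (\<not> b) = p\<^sub>1 \<and> lam e b = Unh 1"
    by (rule Q3_pot_eight_vertices[OF wf design pot eight])
  then obtain e\<^sub>1 b\<^sub>1 where e\<^sub>1: "e\<^sub>1 \<in> edges H" "endp H e\<^sub>1 b\<^sub>1 = y\<^sub>1" "endp H e\<^sub>1 (\<not> b\<^sub>1) = p\<^sub>1"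
    "lam e\<^sub>1 b\<^sub>1 = Unh 1"
    by blast
  define f where "f v = (if v = x\<^sub>0 then 0 else if v = r then 1 else if v = p\<^sub>1 then 2
    else if v = y\<^sub>1 then 3 else if v = p\<^sub>2 then 4 else if v = y\<^sub>2 then 5 else if v = z then 6
    else 7 :: nat)" for v
  have f: "f x\<^sub>0 = 0" "f r = 1" "f p\<^sub>1 = 2" "f y\<^sub>1 = 3" "f p\<^sub>2 = 4" "f y\<^sub>2 = 5" "f z = 6" "f q = 7"
    using dist by (auto simp: f_def)
  have "f ` verts H = verts Q3"
    by (simp add: V f Q3_verts lessThan_8)
  moreover have "finite (verts H)"
    using wf by (simp add: wf_graph_def)
  ultimately have bij: "bij_betw f (verts H) (verts Q3)"
    using eight eq_card_imp_inj_on[of "verts H" f] by (simp add: bij_betw_def Q3_verts)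
  moreover have "tile_at H lam w = Q3_vertex_tile (f w)" if "w \<in> verts H" for w
    using that tiles unfolding V by (auto simp: f Q3_vertex_tile_def)
  moreover have "f (endp H e b) = 3 \<longleftrightarrow> f (endp H e (\<not> b)) = 2"
    if "e \<in> edges H" "lam e b = Unh 1" for e b
  proof -
    have "endp H e b \<in> verts H" "endp H e (\<not> b) \<in> verts H" "y\<^sub>1 \<in> verts H" "p\<^sub>1 \<in> verts H"
      using wf that(1) V by (simp_all add: wf_graph_def)
    then have "f (endp H e b) = 3 \<longleftrightarrow> endp H e b = y\<^sub>1" "f (endp H e (\<not> b)) = 2 \<longleftrightarrow> endp H e (\<not> b) = p\<^sub>1"
      using bij_betw_imp_inj_on[OF bij] f(3,4) by (metis inj_on_eq_iff)+
    then show ?thesis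
      using Q3_pot_symbol_1_matching[OF wf design pot that e\<^sub>1(1,4)] e\<^sub>1(2,3) by simp
  qed
  ultimately show ?thesis
    by (rule that)
qed

lemma Q3_pot_bond_Q3_edge:
  assumes "x < 8" "y < 8" "(Q3_vertex_tile x, a, Q3_vertex_tile y) \<in> Q3_pot_bonds"
    and "a = 1 \<Longrightarrow> x = 3 \<longleftrightarrow> y = 2"
  shows "\<exists>e\<in>edges Q3. ends Q3 e = {x, y}"
proof (rule Q3_edge_if_odd_not_antipodal[OF assms(1,2)])
  have "(x, y) \<in>
      {(0, 2), (0, 4), (0, 1), (3, 2), (3, 1), (3, 7), (5, 4), (5, 1), (5, 7), (6, 2), (6, 4), (6, 7)}"
    using assms Q3_pot_tiles_distinct Q3_pot_tiles_distinct[symmetric]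
    unfolding lessThan_iff[symmetric] lessThan_8
    by (elim insertE emptyE; simp add: Q3_vertex_tile_def Q3_pot_bonds_def)
  then show "Q3_odd x \<noteq> Q3_odd y" "y \<noteq> 7 - x"
    by (auto simp: Q3_odd_def)
qed

lemma Q3_pot_eight_vertices_graph_iso:
  assumes wf: "wf_graph H" and design: "assembly_design H lam" and pot: "pot_of_design H lam \<subseteq> Q3_pot"
    and eight: "card (verts H) = 8"
  shows "graph_iso H Q3"
proof -
  obtain f where bij: "bij_betw f (verts H) (verts Q3)"
    and tiles: "\<And>w. w \<in> verts H \<Longrightarrow> tile_at H lam w = Q3_vertex_tile (f w)"
    and matching: "\<And>e b. e \<in> edges H \<Longrightarrow> lam e b = Unh 1 \<Longrightarrow>
      f (endp H e b) = 3 \<longleftrightarrow> f (endp H e (\<not> b)) = 2"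
    using Q3_pot_eight_vertices_map[OF wf design pot eight] by blast
  have "card (edges H) = card (edges Q3)"
  proof -
    have "size (tile_at H lam v) = 3" if "v \<in> verts H" for v
      using pot that by (auto simp: pot_of_design_def Q3_pot_def Q3_pot_tiles)
    then show ?thesis
      using sum_size_tile_at[OF wf, of lam] eight by (simp add: Q3_edges)
  qed
  moreover have "\<exists>e'\<in>edges Q3. ends Q3 e' = f ` ends H e" if e: "e \<in> edges H" for e
  proof -
    obtain b a where lab: "lam e b = Unh a" "lam e (\<not> b) = Hat a"
      using assembly_design_unhatted_end[OF design e] .
    have ends: "endp H e b \<in> verts H" "endp H e (\<not> b) \<in> verts H"
      using wf e by (simp_all add: wf_graph_def)
    have "\<exists>e'\<in>edges Q3. ends Q3 e' = {f (endp H e b), f (endp H e (\<not> b))}"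
    proof (rule Q3_pot_bond_Q3_edge)
      show "f (endp H e b) < 8" "f (endp H e (\<not> b)) < 8"
        using bij ends by (auto simp: bij_betw_def Q3_verts)
      show "(Q3_vertex_tile (f (endp H e b)), a, Q3_vertex_tile (f (endp H e (\<not> b))))
          \<in> Q3_pot_bonds"
        using Q3_pot_edge_bond[OF wf pot e lab] tiles[OF ends(1)] tiles[OF ends(2)] by simp
      show "f (endp H e b) = 3 \<longleftrightarrow> f (endp H e (\<not> b)) = 2" if "a = 1"
        using matching[OF e] lab(1) that by simp
    qed
    then show ?thesis
      using ends_eq[of H e b] by simp
  qed
  ultimately show ?thesis
    using graph_iso_by_vertex_bijection[OF wf bij Q3_pot_inj_on_ends[OF wf design pot]]
    by (simp add: Q3_edges)
qed

theorem realizes_scen3_Q3_pot: "realizes_scen3 Q3_pot Q3"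
proof -
  have "card (verts Q3) \<le> card (verts H) \<and> (card (verts H) = card (verts Q3) \<longrightarrow> graph_iso H Q3)"
    if wf: "wf_graph H" and "realizes Q3_pot H" for H
  proof -
    obtain lam where design: "assembly_design H lam" and pot: "pot_of_design H lam \<subseteq> Q3_pot"
      using \<open>realizes Q3_pot H\<close> unfolding realizes_def by blast
    have "card (verts H) \<noteq> 0"
      using wf by (simp add: wf_graph_def)
    then show ?thesis
      using Q3_pot_tile_counts(1)[OF wf design pot] Q3_pot_eight_vertices_graph_iso[OF wf design pot]
      by (simp add: Q3_verts)
  qed
  then show ?thesis
    using is_pot_Q3_pot realizes_Q3_pot_Q3 unfolding realizes_scen3_def by blast
qed

theorem proposition4:
  shows "(\<exists>P. realizes_scen3 P Q3 \<and> card (sigma_of P) = 5) \<and>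
         (\<forall>P. realizes_scen3 P Q3 \<longrightarrow> card (sigma_of P) \<ge> 5)"
  using realizes_scen3_Q3_pot sigma_of_Q3_pot card_sigma_of_ge_5_if_realizes_scen3_Q3 by auto

end
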